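(* Let $k\ge0$, let $\eta$ be an $\mathbb S^{2^k}$-invariant Borel probability measure on $I^{\mathbb Z}$, and suppose $D_k[\eta]$ is ergodic with respect to $\mathbb S\times\mathbb O$. Then for every $n>k$, the number $\varrho_n=e^{2\pi i/2^n}$ is not an eigenvalue of $\mathbb S$ (of the operator $f\mapsto f\circ\mathbb S$) on $L^2(I^{\mathbb Z},\theta_0[D_k[\eta]])$.
   Context: $I=\{0,1\}$. $\mathbb S$ is the left shift on $I^{\mathbb Z}$; $\mathbb S^j\eta$ denotes pushforward. $I^{\mathbb N}$ is the space of $0$–$1$ sequences $(\alpha_i)_{i\ge1}$ with uniform Bernoulli measure $m$; $\mathbb O$ is the odometer (if $\alpha_1=\dots=\alpha_{n-1}=1$, $\alpha_n=0$, then $\mathbb O[\alpha]_i=0$ for $i<n$, $\mathbb O[\alpha]_n=1$, $\mathbb O[\alpha]_i=\alpha_i$ for $i>n$). $A_{r,k}=\{\alpha:\sum_{i=1}^k\alpha_i2^{i-1}=r\}$. $D_k[\eta]=\sum_{i=0}^{2^k-1}\mathbb S^i\eta\times(\chi_{A_{i,k}}m)$. $\theta_0[\nu]$ denotes the projection of a measure $\nu$ on $I^{\mathbb Z}\times I^{\mathbb N}$ to $I^{\mathbb Z}$; thus $\theta_0[D_k[\eta]]=2^{-k}\sum_{i=0}^{2^k-1}\mathbb S^i\eta$. *)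

theory Defs
  imports "HOL-Probability.Probability"
begin

text \<open>The space I^Z (two-sided 0-1 sequences) with its product (= Borel) sigma algebra.\<close>
definition Zsp :: "(int \<Rightarrow> bool) measure" where
  "Zsp = Pi\<^sub>M UNIV (\<lambda>_. count_space UNIV)"

text \<open>The space I^N; index j :: nat stands for the paper's coordinate alpha_(j+1).
  m is the uniform Bernoulli product measure.\<close>
definition m_meas :: "(nat \<Rightarrow> bool) measure" where
  "m_meas = Pi\<^sub>M UNIV (\<lambda>_. measure_pmf (bernoulli_pmf (1/2)))"

definition shiftS :: "(int \<Rightarrow> bool) \<Rightarrow> (int \<Rightarrow> bool)" where
  "shiftS x = (\<lambda>i. x (i + 1))"

text \<open>Odometer (adding one with carry); on the all-ones sequence (a null set) it gives all zeros.\<close>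
definition odometer :: "(nat \<Rightarrow> bool) \<Rightarrow> (nat \<Rightarrow> bool)" where
  "odometer a = (if \<exists>n. \<not> a n then
      (let n = (LEAST n. \<not> a n) in (\<lambda>i. if i < n then False else if i = n then True else a i))
    else (\<lambda>_. False))"

definition A_set :: "nat \<Rightarrow> nat \<Rightarrow> (nat \<Rightarrow> bool) set" where
  "A_set r k = {a. (\<Sum>i<k. (if a i then 2 ^ i else 0)) = r}"

definition D_meas :: "nat \<Rightarrow> (int \<Rightarrow> bool) measure \<Rightarrow> ((int \<Rightarrow> bool) \<times> (nat \<Rightarrow> bool)) measure" where
  "D_meas k \<eta> = measure_of (space (Zsp \<Otimes>\<^sub>M m_meas)) (sets (Zsp \<Otimes>\<^sub>M m_meas))
     (\<lambda>X. \<Sum>i<2^k. emeasure (distr \<eta> Zsp (shiftS ^^ i) \<Otimes>\<^sub>M density m_meas (indicator (A_set i k))) X)"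

definition theta0 :: "((int \<Rightarrow> bool) \<times> (nat \<Rightarrow> bool)) measure \<Rightarrow> (int \<Rightarrow> bool) measure" where
  "theta0 \<nu> = distr \<nu> Zsp fst"

definition ergodic :: "'a measure \<Rightarrow> ('a \<Rightarrow> 'a) \<Rightarrow> bool" where
  "ergodic M T \<longleftrightarrow> prob_space M \<and> T \<in> measurable M M \<and> distr M M T = M \<and>
     (\<forall>A\<in>sets M. T -` A \<inter> space M = A \<longrightarrow> measure M A = 0 \<or> measure M A = 1)"

definition koopman_eigenvalue :: "'a measure \<Rightarrow> ('a \<Rightarrow> 'a) \<Rightarrow> complex \<Rightarrow> bool" where
  "koopman_eigenvalue M T c \<longleftrightarrow> (\<exists>f :: 'a \<Rightarrow> complex.
      f \<in> borel_measurable M \<and> integrable M (\<lambda>x. (cmod (f x))\<^sup>2) \<and>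
      \<not> (AE x in M. f x = 0) \<and> (AE x in M. f (T x) = c * f x))"

end

theory Submission
  imports Defs
begin

text \<open>Raising an eigenfunction f for \<open>\<rho>\<^sub>n\<close> to the power 2^(n-k-1) gives an eigenfunction g with
  eigenvalue e^(pi i / 2^k). The odometer adds 1 modulo 2^(k+1) to the number
  s(alpha) = sum_(i<=k) alpha_(i+1) 2^i, so h(x, alpha) = g(x) e^(-pi i s(alpha) / 2^k) is invariant
  under S \<times> O. Flipping the bit alpha_(k+1) changes s by 2^k or -2^k and hence turns h into -h;
  it also preserves D_k[\<eta>], because it preserves m and every set A_(i,k). So the invariant set
  where h lies in a fixed half plane has the same measure as the set where -h does, and by
  ergodicity both are null: h = 0 a.e., contradicting f \<noteq> 0.\<close>

lemma odometer_apply: "odometer a i = (a i \<noteq> (\<forall>j<i. a j))"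
proof (cases "\<exists>n. \<not> a n")
  case True
  define n0 where "n0 = (LEAST n. \<not> a n)"
  have n0: "\<not> a n0" unfolding n0_def using True by (metis LeastI)
  have below: "j < n0 \<Longrightarrow> a j" for j unfolding n0_def using not_less_Least by blast
  have "odometer a = (\<lambda>i. if i < n0 then False else if i = n0 then True else a i)"
    using True unfolding odometer_def n0_def by (simp add: Let_def)
  then show ?thesis using n0 below
    by (cases "i < n0"; cases "i = n0") (auto, meson linorder_neqE_nat)
next
  case False
  then show ?thesis unfolding odometer_def by auto
qed

definition binary_value :: "nat \<Rightarrow> (nat \<Rightarrow> bool) \<Rightarrow> nat" where
  "binary_value N a = (\<Sum>i<N. if a i then 2 ^ i else 0)"

lemma A_set_eq: "A_set r k = {a. binary_value k a = r}"
  by (simp add: A_set_def binary_value_def)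

lemma binary_value_odometer:
  "binary_value N a + 1 = binary_value N (odometer a) + (if \<forall>j<N. a j then 2 ^ N else 0)"
proof (induction N)
  case (Suc N)
  have carry: "(\<forall>j<Suc N. a j) = ((\<forall>j<N. a j) \<and> a N)" using less_Suc_eq by auto
  show ?case using Suc by (auto simp: binary_value_def odometer_apply carry)
qed (simp add: binary_value_def)

definition flip_bit :: "nat \<Rightarrow> (nat \<Rightarrow> bool) \<Rightarrow> (nat \<Rightarrow> bool)" where
  "flip_bit k a = a(k := \<not> a k)"

lemma binary_value_flip_bit: "binary_value k (flip_bit k a) = binary_value k a"
  unfolding binary_value_def flip_bit_def by (intro sum.cong) auto

lemma binary_value_Suc: "binary_value (Suc k) a = binary_value k a + (if a k then 2 ^ k else 0)"
  by (simp add: binary_value_def)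

lemma measurable_funpow: "T \<in> measurable M M \<Longrightarrow> T ^^ m \<in> measurable M M"
  by (induction m) (auto intro: measurable_compose)

lemma distr_funpow_eq:
  assumes T: "T \<in> measurable M M" and preserving: "distr M M T = M"
  shows "distr M M (T ^^ m) = M"
proof (induction m)
  case (Suc m)
  have "distr M M (T ^^ Suc m) = distr (distr M M (T ^^ m)) M T"
    by (subst distr_distr[OF T measurable_funpow[OF T]]) (simp add: comp_def)
  also have "\<dots> = M" using Suc preserving by simp
  finally show ?case .
qed (simp add: distr_id2)

lemma AE_funpow_invariant:
  assumes T: "T \<in> measurable M M" and preserving: "distr M M T = M"
    and invariant: "AE z in M. (T z \<in> A \<longleftrightarrow> z \<in> A)"
  shows "AE z in M. \<forall>m. ((T ^^ m) z \<in> A \<longleftrightarrow> z \<in> A)"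
proof -
  have "AE z in M. (T ^^ Suc m) z \<in> A \<longleftrightarrow> (T ^^ m) z \<in> A" for m
  proof -
    have "AE z in distr M M (T ^^ m). (T z \<in> A \<longleftrightarrow> z \<in> A)"
      by (subst distr_funpow_eq[OF T preserving]) (rule invariant)
    from AE_distrD[OF measurable_funpow[OF T] this] show ?thesis by simp
  qed
  then have "AE z in M. \<forall>m. (T ^^ Suc m) z \<in> A \<longleftrightarrow> (T ^^ m) z \<in> A"
    by (simp add: AE_all_countable)
  then show ?thesis
  proof (rule eventually_mono)
    fix z assume step: "\<forall>m. (T ^^ Suc m) z \<in> A \<longleftrightarrow> (T ^^ m) z \<in> A"
    show "\<forall>m. (T ^^ m) z \<in> A \<longleftrightarrow> z \<in> A"
    proof
      fix m show "(T ^^ m) z \<in> A \<longleftrightarrow> z \<in> A" by (induction m) (use step in auto)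
    qed
  qed
qed

text \<open>The definition of ergodicity only speaks about strictly invariant sets; an a.e. invariant
  set A agrees a.e. with the strictly invariant set of points visiting A infinitely often.\<close>

lemma ergodic_AE_invariant_set:
  assumes erg: "ergodic M T" and A: "A \<in> sets M"
    and invariant: "AE z in M. (T z \<in> A \<longleftrightarrow> z \<in> A)"
  shows "measure M A = 0 \<or> measure M A = 1"
proof -
  have T: "T \<in> measurable M M" and preserving: "distr M M T = M"
    and strictly_invariant: "\<And>B. B \<in> sets M \<Longrightarrow> T -` B \<inter> space M = B \<Longrightarrow>
      measure M B = 0 \<or> measure M B = 1"
    using erg unfolding ergodic_def by auto
  define B where "B = (\<Inter>N. \<Union>m\<in>{N..}. (T ^^ m) -` A \<inter> space M)"
  have B: "B \<in> sets M" unfolding B_def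
    using measurable_funpow[OF T] A by (intro sets.countable_INT' sets.countable_UN') auto
  have B_iff: "z \<in> B \<longleftrightarrow> z \<in> space M \<and> (\<forall>N. \<exists>m\<ge>N. (T ^^ m) z \<in> A)" for z
    unfolding B_def by auto
  have "T -` B \<inter> space M = B"
  proof (intro set_eqI iffI)
    fix z assume z: "z \<in> T -` B \<inter> space M"
    then have Tz: "T z \<in> B" by simp
    have "\<exists>m\<ge>N. (T ^^ m) z \<in> A" for N
    proof -
      obtain m where "m \<ge> N" "(T ^^ m) (T z) \<in> A" using Tz unfolding B_iff by blast
      then show ?thesis by (intro exI[of _ "Suc m"]) (auto simp: funpow_swap1)
    qed
    with z show "z \<in> B" unfolding B_iff by auto
  next
    fix z assume z: "z \<in> B"
    have "\<exists>m\<ge>N. (T ^^ m) (T z) \<in> A" for N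
    proof -
      obtain m where "m \<ge> Suc N" "(T ^^ m) z \<in> A" using z unfolding B_iff by blast
      then show ?thesis by (intro exI[of _ "m - 1"]) (cases m, auto simp: funpow_swap1)
    qed
    moreover have "z \<in> space M" using z by (simp add: B_iff)
    ultimately have "T z \<in> B" using measurable_space[OF T] by (simp add: B_iff)
    with \<open>z \<in> space M\<close> show "z \<in> T -` B \<inter> space M" by simp
  qed
  with B have "measure M B = 0 \<or> measure M B = 1" by (rule strictly_invariant)
  moreover have "measure M B = measure M A"
  proof (rule measure_eq_AE[OF _ B A])
    show "AE z in M. z \<in> B \<longleftrightarrow> z \<in> A"
      using AE_funpow_invariant[OF T preserving invariant]
    proof (rule AE_mp, intro AE_I2 impI)
      fix z assume "z \<in> space M" "\<forall>m. (T ^^ m) z \<in> A \<longleftrightarrow> z \<in> A"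
      then show "z \<in> B \<longleftrightarrow> z \<in> A" unfolding B_iff by auto
    qed
  qed
  ultimately show ?thesis by simp
qed

definition half_plane :: "complex set" where
  "half_plane = {w. 0 < Re w \<or> (Re w = 0 \<and> 0 < Im w)}"

lemma half_plane_or_uminus_iff: "w \<in> half_plane \<or> - w \<in> half_plane \<longleftrightarrow> w \<noteq> 0"
  by (auto simp: half_plane_def complex_eq_iff)

lemma not_half_plane_and_uminus: "\<not> (w \<in> half_plane \<and> - w \<in> half_plane)"
  by (auto simp: half_plane_def)

lemma half_plane_borel[measurable]: "half_plane \<in> sets borel"
  unfolding half_plane_def by measurable

lemma ergodic_odd_invariant_AE_zero:
  fixes h :: "'a \<Rightarrow> complex"
  assumes erg: "ergodic M T" and h[measurable]: "h \<in> borel_measurable M"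
    and invariant: "AE z in M. h (T z) = h z"
    and \<tau>: "\<tau> \<in> measurable M M" "distr M M \<tau> = M"
    and odd: "\<And>z. z \<in> space M \<Longrightarrow> h (\<tau> z) = - h z"
  shows "AE z in M. h z = 0"
proof -
  interpret prob_space M using erg by (simp add: ergodic_def)
  have T: "T \<in> measurable M M" using erg by (simp add: ergodic_def)
  define A where "A = {z \<in> space M. h z \<in> half_plane}"
  define A' where "A' = {z \<in> space M. - h z \<in> half_plane}"
  have [measurable]: "A \<in> sets M" "A' \<in> sets M" unfolding A_def A'_def by measurable
  have "measure M A = 0 \<or> measure M A = 1"
    using invariant measurable_space[OF T]
    by (intro ergodic_AE_invariant_set[OF erg]) (auto simp: A_def elim!: eventually_mono)
  moreover have "measure M A' = measure M A"
  proof -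
    have "A' = \<tau> -` A \<inter> space M" using odd measurable_space[OF \<tau>(1)] by (auto simp: A_def A'_def)
    then show ?thesis using measure_distr[OF \<tau>(1), of A] \<tau>(2) by simp
  qed
  moreover have "measure M {z \<in> space M. h z \<noteq> 0} = measure M A + measure M A'"
  proof -
    have "{z \<in> space M. h z \<noteq> 0} = A \<union> A'" "A \<inter> A' = {}"
      using half_plane_or_uminus_iff not_half_plane_and_uminus by (auto simp: A_def A'_def)
    then show ?thesis by (simp add: finite_measure_Union)
  qed
  moreover have "measure M {z \<in> space M. h z \<noteq> 0} \<le> 1" by (rule prob_le_1)
  ultimately have "measure M {z \<in> space M. h z \<noteq> 0} = 0" by auto
  then show ?thesis by (subst AE_iff_measurable[OF _ refl]) (auto simp: emeasure_eq_measure)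
qed

lemma map_pmf_Not_bernoulli_half: "map_pmf Not (bernoulli_pmf (1/2)) = bernoulli_pmf (1/2)"
  unfolding bernoulli_pmf_half_conv_pmf_of_set
  by (rule map_pmf_of_set_bij_betw) (auto simp: bij_betw_def inj_def image_iff)

lemma emeasure_bernoulli_half_vimage_Not:
  "emeasure (measure_pmf (bernoulli_pmf (1/2))) (Not -` X) = emeasure (measure_pmf (bernoulli_pmf (1/2))) X"
  by (metis emeasure_map_pmf map_pmf_Not_bernoulli_half)

lemma prob_space_m_meas: "prob_space m_meas"
  unfolding m_meas_def by (intro prob_space_PiM prob_space_measure_pmf)

lemma space_m_meas: "space m_meas = UNIV"
  unfolding m_meas_def by (auto simp: space_PiM)

lemma measurable_flip_bit[measurable]: "flip_bit k \<in> measurable m_meas m_meas"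
  unfolding m_meas_def flip_bit_def
  by (rule measurable_PiM_single') (auto simp: space_PiM)

lemma distr_m_meas_flip_bit: "distr m_meas m_meas (flip_bit k) = m_meas"
proof -
  let ?B = "measure_pmf (bernoulli_pmf (1/2))"
  have B: "\<And>i. i \<in> UNIV \<Longrightarrow> prob_space ?B" by (rule prob_space_measure_pmf)
  show ?thesis
  proof (rule measure_eqI_PiM_infinite[of _ UNIV "\<lambda>_. ?B"])
    show "sets (distr m_meas m_meas (flip_bit k)) = sets (Pi\<^sub>M UNIV (\<lambda>_. ?B))"
      and "sets m_meas = sets (Pi\<^sub>M UNIV (\<lambda>_. ?B))"
      by (simp_all add: m_meas_def)
    show "finite_measure (distr m_meas m_meas (flip_bit k))"
      using prob_space_m_meas
      by (intro prob_space.finite_measure prob_space.prob_space_distr) simp_all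
    fix A J assume J: "finite (J::nat set)" "J \<subseteq> UNIV" and A: "\<And>i. i \<in> J \<Longrightarrow> A i \<in> sets ?B"
    define A' where "A' i = (if i = k then Not -` A i else A i)" for i
    have "flip_bit k -` prod_emb UNIV (\<lambda>_. ?B) J (Pi\<^sub>E J A) \<inter> space m_meas
        = prod_emb UNIV (\<lambda>_. ?B) J (Pi\<^sub>E J A')"
      by (auto simp: prod_emb_def space_m_meas A'_def flip_bit_def PiE_iff split: if_splits)
    then have "emeasure (distr m_meas m_meas (flip_bit k)) (prod_emb UNIV (\<lambda>_. ?B) J (Pi\<^sub>E J A))
        = emeasure m_meas (prod_emb UNIV (\<lambda>_. ?B) J (Pi\<^sub>E J A'))"
      using J A measurable_flip_bit
      by (subst emeasure_distr) (auto simp: m_meas_def intro!: sets_PiM_I)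
    also have "\<dots> = (\<Prod>i\<in>J. emeasure ?B (A' i))"
      unfolding m_meas_def using J by (intro emeasure_PiM_emb B) auto
    also have "\<dots> = (\<Prod>i\<in>J. emeasure ?B (A i))"
      by (intro prod.cong refl)
        (simp add: A'_def emeasure_bernoulli_half_vimage_Not)
    also have "\<dots> = emeasure m_meas (prod_emb UNIV (\<lambda>_. ?B) J (Pi\<^sub>E J A))"
      unfolding m_meas_def using J A by (intro emeasure_PiM_emb[symmetric] B) auto
    finally show "emeasure (distr m_meas m_meas (flip_bit k)) (prod_emb UNIV (\<lambda>_. ?B) J (Pi\<^sub>E J A))
        = emeasure m_meas (prod_emb UNIV (\<lambda>_. ?B) J (Pi\<^sub>E J A))" .
  qed
qed

lemma measurable_binary_value[measurable]: "binary_value N \<in> measurable m_meas (count_space UNIV)"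
proof -
  have "measurable m_meas (measure_pmf (bernoulli_pmf (1/2))) = measurable m_meas (count_space UNIV)"
    by (rule measurable_cong_sets) auto
  moreover have "(\<lambda>a. a j) \<in> measurable m_meas (measure_pmf (bernoulli_pmf (1/2)))" for j
    unfolding m_meas_def by (rule measurable_component_singleton) auto
  ultimately have [measurable]: "(\<lambda>a. a j) \<in> measurable m_meas (count_space UNIV)" for j
    by simp
  show ?thesis unfolding binary_value_def by measurable
qed

lemma A_set_sets[measurable]: "A_set r k \<in> sets m_meas"
proof -
  have "A_set r k = binary_value k -` {r} \<inter> space m_meas" by (auto simp: A_set_eq space_m_meas)
  then show ?thesis by simp
qed

lemma measurable_shiftS[measurable]: "shiftS \<in> measurable Zsp Zsp"
  unfolding Zsp_def shiftS_def by (rule measurable_PiM_single') (auto simp: space_PiM)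

definition D_component :: "nat \<Rightarrow> (int \<Rightarrow> bool) measure \<Rightarrow> nat \<Rightarrow> ((int \<Rightarrow> bool) \<times> (nat \<Rightarrow> bool)) measure" where
  "D_component k \<eta> i = distr \<eta> Zsp (shiftS ^^ i) \<Otimes>\<^sub>M density m_meas (indicator (A_set i k))"

lemma sets_D_component: "sets (D_component k \<eta> i) = sets (Zsp \<Otimes>\<^sub>M m_meas)"
  unfolding D_component_def by (rule sets_pair_measure_cong) auto

lemma sets_D_meas: "sets (D_meas k \<eta>) = sets (Zsp \<Otimes>\<^sub>M m_meas)"
  unfolding D_meas_def
  by (rule sets_measure_of_conv[THEN trans]) (simp add: sets.space_closed sets.sigma_sets_eq)

lemma emeasure_D_meas:
  assumes X: "X \<in> sets (Zsp \<Otimes>\<^sub>M m_meas)"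
  shows "emeasure (D_meas k \<eta>) X = (\<Sum>i<2^k. emeasure (D_component k \<eta> i) X)"
  unfolding D_meas_def D_component_def[symmetric]
proof (rule emeasure_measure_of_sigma[OF sets.sigma_algebra_axioms _ _ X])
  show "positive (sets (Zsp \<Otimes>\<^sub>M m_meas)) (\<lambda>X. \<Sum>i<2 ^ k. emeasure (D_component k \<eta> i) X)"
    by (simp add: positive_def)
  show "countably_additive (sets (Zsp \<Otimes>\<^sub>M m_meas)) (\<lambda>X. \<Sum>i<2 ^ k. emeasure (D_component k \<eta> i) X)"
  proof (rule countably_additiveI)
    fix A :: "nat \<Rightarrow> _"
    assume A: "range A \<subseteq> sets (Zsp \<Otimes>\<^sub>M m_meas)" "disjoint_family A"
    have "(\<Sum>n. \<Sum>i<2 ^ k. emeasure (D_component k \<eta> i) (A n))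
        = (\<Sum>i<2 ^ k. \<Sum>n. emeasure (D_component k \<eta> i) (A n))"
      by (rule suminf_sum) auto
    also have "\<dots> = (\<Sum>i<2 ^ k. emeasure (D_component k \<eta> i) (\<Union> (range A)))"
      using A sets_D_component by (intro sum.cong refl suminf_emeasure) auto
    finally show "(\<Sum>n. \<Sum>i<2 ^ k. emeasure (D_component k \<eta> i) (A n))
        = (\<Sum>i<2 ^ k. emeasure (D_component k \<eta> i) (\<Union> (range A)))" .
  qed
qed

lemma distr_D_component_flip_bit:
  assumes "sets \<eta> = sets Zsp"
  shows "distr (D_component k \<eta> i) (Zsp \<Otimes>\<^sub>M m_meas) (\<lambda>(x, a). (x, flip_bit k a)) = D_component k \<eta> i"
proof -
  let ?P = "distr \<eta> Zsp (shiftS ^^ i)" and ?Q = "density m_meas (indicator (A_set i k))"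
  have "(\<lambda>a. indicator (A_set i k) (flip_bit k a)) = (indicator (A_set i k) :: _ \<Rightarrow> ennreal)"
    by (intro ext) (simp add: A_set_eq binary_value_flip_bit split: split_indicator)
  moreover have "density (distr m_meas m_meas (flip_bit k)) (indicator (A_set i k))
      = distr (density m_meas (\<lambda>a. indicator (A_set i k) (flip_bit k a))) m_meas (flip_bit k)"
    by (rule density_distr) auto
  ultimately have Q: "distr ?Q m_meas (flip_bit k) = ?Q"
    by (simp add: distr_m_meas_flip_bit)
  have "finite_measure ?Q"
    using prob_space_m_meas
    by (intro finite_measure.finite_measure_restricted prob_space.finite_measure) auto
  then have "distr ?P Zsp (\<lambda>x. x) \<Otimes>\<^sub>M distr ?Q m_meas (flip_bit k)
      = distr (?P \<Otimes>\<^sub>M ?Q) (Zsp \<Otimes>\<^sub>M m_meas) (\<lambda>(x, a). (x, flip_bit k a))"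
    by (intro pair_measure_distr finite_measure.sigma_finite_measure) (simp_all add: Q)
  moreover have "distr ?P Zsp (\<lambda>x. x) = ?P" by (rule distr_id2) simp
  ultimately show ?thesis unfolding D_component_def Q by simp
qed

lemma distr_D_meas_flip_bit:
  assumes "sets \<eta> = sets Zsp"
  shows "distr (D_meas k \<eta>) (D_meas k \<eta>) (\<lambda>(x, a). (x, flip_bit k a)) = D_meas k \<eta>"
    (is "distr ?D ?D ?\<tau> = ?D")
proof (rule measure_eqI)
  let ?\<Omega> = "Zsp \<Otimes>\<^sub>M m_meas"
  have \<tau>: "?\<tau> \<in> measurable ?\<Omega> ?\<Omega>" by measurable
  show "sets (distr ?D ?D ?\<tau>) = sets ?D" by simp
  fix X assume "X \<in> sets (distr ?D ?D ?\<tau>)"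
  then have X: "X \<in> sets ?\<Omega>" by (simp add: sets_D_meas)
  have preimage: "?\<tau> -` X \<inter> space ?\<Omega> \<in> sets ?\<Omega>" using \<tau> X by (rule measurable_sets)
  have "?\<tau> \<in> measurable ?D ?D"
    using \<tau> by (simp add: measurable_cong_sets[OF sets_D_meas sets_D_meas])
  then have "emeasure (distr ?D ?D ?\<tau>) X = emeasure ?D (?\<tau> -` X \<inter> space ?\<Omega>)"
    using X by (simp add: emeasure_distr sets_D_meas sets_eq_imp_space_eq[OF sets_D_meas])
  also have "\<dots> = (\<Sum>i<2^k. emeasure (D_component k \<eta> i) (?\<tau> -` X \<inter> space ?\<Omega>))"
    using preimage by (rule emeasure_D_meas)
  also have "\<dots> = (\<Sum>i<2^k. emeasure (distr (D_component k \<eta> i) ?\<Omega> ?\<tau>) X)"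
  proof (intro sum.cong refl)
    fix i
    have "?\<tau> \<in> measurable (D_component k \<eta> i) ?\<Omega>"
      using \<tau> by (simp add: measurable_cong_sets[OF sets_D_component refl])
    then show "emeasure (D_component k \<eta> i) (?\<tau> -` X \<inter> space ?\<Omega>)
        = emeasure (distr (D_component k \<eta> i) ?\<Omega> ?\<tau>) X"
      using X by (simp add: emeasure_distr sets_eq_imp_space_eq[OF sets_D_component])
  qed
  also have "\<dots> = emeasure ?D X"
    using X by (simp add: distr_D_component_flip_bit[OF assms] emeasure_D_meas)
  finally show "emeasure (distr ?D ?D ?\<tau>) X = emeasure ?D X" .
qed

definition twist :: "nat \<Rightarrow> ('a \<Rightarrow> complex) \<Rightarrow> 'a \<times> (nat \<Rightarrow> bool) \<Rightarrow> complex" where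
  "twist k g = (\<lambda>(x, a). g x * cis (- pi * real (binary_value (Suc k) a) / 2 ^ k))"

lemma measurable_twist[measurable]:
  assumes [measurable]: "g \<in> borel_measurable M"
  shows "twist k g \<in> borel_measurable (M \<Otimes>\<^sub>M m_meas)"
proof -
  have [measurable]: "cis \<in> borel_measurable borel"
    by (intro borel_measurable_continuous_onI continuous_on_cis continuous_on_id)
  show ?thesis unfolding twist_def case_prod_beta by measurable
qed

lemma twist_eq_0_iff: "twist k g (x, a) = 0 \<longleftrightarrow> g x = 0"
  by (simp add: twist_def)

lemma twist_shift_odometer:
  assumes "g y = cis (pi / 2 ^ k) * g x"
  shows "twist k g (y, odometer a) = twist k g (x, a)"
proof -
  define v where "v = binary_value (Suc k) a"
  define w where "w = binary_value (Suc k) (odometer a)"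
  define c :: nat where "c = (if \<forall>j<Suc k. a j then 1 else 0)"
  have "v + 1 = w + c * 2 ^ Suc k"
    using binary_value_odometer[of "Suc k" a] by (simp add: v_def w_def c_def)
  from arg_cong[OF this, of real] have w: "real w = real v + 1 - real c * 2 ^ Suc k"
    by simp
  have "- pi * real w / 2 ^ k = - pi * real v / 2 ^ k + - (pi / 2 ^ k) + 2 * pi * real c"
    by (subst w) (simp add: field_simps)
  then have "cis (- pi * real w / 2 ^ k)
      = cis (- pi * real v / 2 ^ k + - (pi / 2 ^ k)) * cis (2 * pi * real c)"
    by (simp only: cis_mult)
  then have odometer_phase:
    "cis (- pi * real w / 2 ^ k) = cis (- pi * real v / 2 ^ k) * cis (- (pi / 2 ^ k))"
    by (simp add: cis_mult)
  have "twist k g (y, odometer a) = g y * cis (- pi * real w / 2 ^ k)"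
    by (simp add: twist_def w_def)
  also have "\<dots> = g x * cis (- pi * real v / 2 ^ k) * (cis (pi / 2 ^ k) * cis (- (pi / 2 ^ k)))"
    by (simp only: assms odometer_phase ac_simps)
  also have "\<dots> = twist k g (x, a)" by (simp add: cis_mult twist_def v_def)
  finally show ?thesis .
qed

lemma twist_flip_bit: "twist k g (x, flip_bit k a) = - twist k g (x, a)"
proof -
  define \<phi> where "\<phi> b = - pi * real (binary_value (Suc k) b) / 2 ^ k" for b
  have "\<phi> (flip_bit k a) = \<phi> a + (if a k then pi else - pi)"
    by (simp add: \<phi>_def binary_value_Suc binary_value_flip_bit field_simps) (simp add: flip_bit_def)
  then have "cis (\<phi> (flip_bit k a)) = cis (\<phi> a) * cis (if a k then pi else - pi)"
    by (simp add: cis_mult)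
  also have "\<dots> = - cis (\<phi> a)"
    by (simp add: cis_cnj [symmetric])
  finally show ?thesis by (simp add: twist_def \<phi>_def)
qed

lemma cis_pow_two_pow: "cis (pi / 2 ^ (k + d)) ^ 2 ^ d = cis (pi / 2 ^ k)"
proof -
  have "cis (pi / 2 ^ (k + d)) ^ 2 ^ d = cis (real (2 ^ d) * (pi / 2 ^ (k + d)))"
    by (rule Complex.DeMoivre)
  also have "real (2 ^ d) * (pi / 2 ^ (k + d)) = pi / 2 ^ k"
    by (simp add: power_add field_simps)
  finally show ?thesis .
qed

lemma AE_theta0_iff:
  assumes "sets \<nu> = sets (Zsp \<Otimes>\<^sub>M m_meas)" and "{x \<in> space Zsp. P x} \<in> sets Zsp"
  shows "(AE x in theta0 \<nu>. P x) \<longleftrightarrow> (AE z in \<nu>. P (fst z))"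
  unfolding theta0_def
  using assms by (intro AE_distr_iff) (simp_all add: measurable_cong_sets[OF assms(1) refl])

theorem lemma8:
  fixes k n :: nat and \<eta> :: "(int \<Rightarrow> bool) measure"
  assumes "prob_space \<eta>"
    and "sets \<eta> = sets Zsp"
    and "distr \<eta> Zsp (shiftS ^^ (2 ^ k)) = \<eta>"
    and "ergodic (D_meas k \<eta>) (\<lambda>(x, a). (shiftS x, odometer a))"
    and "n > k"
  shows "\<not> koopman_eigenvalue (theta0 (D_meas k \<eta>)) shiftS (cis (2 * pi / 2 ^ n))"
proof
  define D where "D = D_meas k \<eta>"
  assume "koopman_eigenvalue (theta0 D) shiftS (cis (2 * pi / 2 ^ n))"
  then obtain f where [measurable]: "f \<in> borel_measurable Zsp"
    and f_nonzero: "\<not> (AE x in theta0 D. f x = 0)"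
    and f_eigen: "AE x in theta0 D. f (shiftS x) = cis (2 * pi / 2 ^ n) * f x"
    unfolding koopman_eigenvalue_def theta0_def by auto
  obtain d where n: "n = Suc (k + d)" using \<open>n > k\<close> less_iff_Suc_add by blast
  define g where "g x = f x ^ 2 ^ d" for x
  have [measurable]: "g \<in> borel_measurable Zsp" unfolding g_def by measurable
  have sets_D: "sets D = sets (Zsp \<Otimes>\<^sub>M m_meas)" unfolding D_def by (rule sets_D_meas)
  have "AE x in theta0 D. g (shiftS x) = cis (pi / 2 ^ k) * g x"
    using f_eigen by eventually_elim (simp add: g_def n power_mult_distrib cis_pow_two_pow)
  then have "AE z in D. g (shiftS (fst z)) = cis (pi / 2 ^ k) * g (fst z)"
    by (subst (asm) AE_theta0_iff[OF sets_D]) simp_all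
  then have invariant: "AE z in D. twist k g ((\<lambda>(x, a). (shiftS x, odometer a)) z) = twist k g z"
    by eventually_elim (auto simp: twist_shift_odometer)
  have "AE z in D. twist k g z = 0"
  proof (rule ergodic_odd_invariant_AE_zero[OF assms(4)[folded D_def] _ invariant])
    show "twist k g \<in> borel_measurable D"
      unfolding measurable_cong_sets[OF sets_D refl] by measurable
    show "(\<lambda>(x, a). (x, flip_bit k a)) \<in> measurable D D"
      by (simp add: measurable_cong_sets[OF sets_D sets_D])
    show "distr D D (\<lambda>(x, a). (x, flip_bit k a)) = D"
      unfolding D_def using assms(2) by (rule distr_D_meas_flip_bit)
  qed (auto simp: twist_flip_bit)
  then have "AE x in theta0 D. f x = 0"
    by (subst AE_theta0_iff[OF sets_D]) (auto simp: g_def twist_eq_0_iff elim!: eventually_mono)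
  with f_nonzero show False by contradiction
qed

end
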